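(* Let $L$ be a field of characteristic $p>0$ and let $Z,T$ be indeterminates over $L$. Let $g = Z^{p^e} - \alpha T^m + \beta$, where $\alpha,\beta \in L$ are nonzero and $e \ge 1$, $m>1$ are integers with $m$ coprime to $p$. Then $D = L[Z,T]/(g)$ does not admit any non-trivial exponential map.
   Context: For an $L$-algebra $D$ and an indeterminate $U$ over $D$, an $L$-algebra homomorphism $\phi = \phi_U : D \to D[U]$ is an exponential map on $D$ if (i) $\varepsilon_0 \circ \phi_U$ is the identity of $D$, where $\varepsilon_0 : D[U]\to D$ is evaluation at $U=0$; and (ii) $\phi_V \circ \phi_U = \phi_{V+U}$, where $\phi_V: D \to D[V]$ (same map with $U$ replaced by another indeterminate $V$) is extended to $D[U] \to D[V,U]$ by $\phi_V(U)=U$. The ring of invariants is $D^{\phi} = \{a\in D : \phi(a) = a\}$, and $\phi$ is non-trivial if $D^\phi \neq D$. *)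

theory Defs
  imports "HOL-Computational_Algebra.Computational_Algebra"
begin

text \<open>Polynomials in two variables Z, T over L are represented as 'a poly poly:
  the outer variable is Z, the inner variable (in the coefficients) is T.\<close>

definition gpoly :: "nat \<Rightarrow> nat \<Rightarrow> nat \<Rightarrow> 'a::field \<Rightarrow> 'a \<Rightarrow> 'a poly poly" where
  "gpoly p e m \<alpha> \<beta> = monom 1 (p ^ e) + [: [:\<beta>:] - monom \<alpha> m :]"

definition alg_map :: "('a::field \<Rightarrow> 'd::comm_ring_1) \<Rightarrow> bool" where
  "alg_map \<iota> \<longleftrightarrow> \<iota> 1 = 1 \<and> (\<forall>x y. \<iota> (x + y) = \<iota> x + \<iota> y) \<and> (\<forall>x y. \<iota> (x * y) = \<iota> x * \<iota> y)"

definition ev2 :: "('a::field \<Rightarrow> 'd::comm_ring_1) \<Rightarrow> 'd \<Rightarrow> 'd \<Rightarrow> 'a poly poly \<Rightarrow> 'd" where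
  "ev2 \<iota> z t f = poly (map_poly (\<lambda>q. poly (map_poly \<iota> q) t) f) z"

text \<open>D is presented as L[Z,T]/(g): via Z |-> z, T |-> t, the evaluation map is
  surjective with kernel the principal ideal (g).\<close>
definition presents :: "('a::field \<Rightarrow> 'd::comm_ring_1) \<Rightarrow> 'd \<Rightarrow> 'd \<Rightarrow> 'a poly poly \<Rightarrow> bool" where
  "presents \<iota> z t g \<longleftrightarrow> alg_map \<iota> \<and> surj (ev2 \<iota> z t) \<and> (\<forall>f. ev2 \<iota> z t f = 0 \<longleftrightarrow> g dvd f)"

text \<open>Exponential map phi = phi_U : D -> D[U] (L-algebra homomorphism).
  Condition (ii): phi_V(phi_U(a)) = phi_{V+U}(a) in D[V,U], represented as
  'd poly poly with outer variable U and inner variable V. The left side is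
  map_poly phi (phi a); the right side substitutes U := V + U in phi a.\<close>
definition exp_map :: "('a::field \<Rightarrow> 'd::comm_ring_1) \<Rightarrow> ('d \<Rightarrow> 'd poly) \<Rightarrow> bool" where
  "exp_map \<iota> \<phi> \<longleftrightarrow>
     (\<forall>x y. \<phi> (x + y) = \<phi> x + \<phi> y) \<and>
     (\<forall>x y. \<phi> (x * y) = \<phi> x * \<phi> y) \<and>
     \<phi> 1 = 1 \<and>
     (\<forall>c. \<phi> (\<iota> c) = [:\<iota> c:]) \<and>
     (\<forall>a. poly (\<phi> a) 0 = a) \<and>
     (\<forall>a. map_poly \<phi> (\<phi> a) = poly (map_poly (\<lambda>c. [:[:c:]:]) (\<phi> a)) [:[:0, 1:], 1:])"

definition trivial_exp_map :: "('d::comm_ring_1 \<Rightarrow> 'd poly) \<Rightarrow> bool" where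
  "trivial_exp_map \<phi> \<longleftrightarrow> (\<forall>a. \<phi> a = [:a:])"

end

theory Submission
  imports Defs "HOL-Number_Theory.Cong"
begin

text \<open>Write \<open>q = p\<^sup>e\<close> and \<open>f = \<alpha>T\<^sup>m - \<beta>\<close>, so that \<open>z\<^sup>q = f(t)\<close> in \<open>D\<close>. Every element of \<open>D\<close> is
  \<open>x = \<Sum> r\<^sub>i(t) z\<^sup>i\<close> with \<open>i < q\<close>, and Frobenius gives \<open>x\<^sup>q = \<Sum> r\<^sub>i(t)\<^sup>q f(t)\<^sup>i\<close>, a polynomial in \<open>t\<close> whose summands
  have the distinct degrees \<open>q deg r\<^sub>i + m i\<close> since \<open>m\<close> and \<open>q\<close> are coprime. Hence \<open>D\<close> is a domain
  and \<open>x\<^sup>q\<close> has \<open>T\<close>-degree of the form \<open>q k + m j\<close>.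

  Let \<open>\<phi>\<close> be an exponential map and \<open>deg x\<close> the \<open>U\<close>-degree of \<open>\<phi> x\<close>; it is additive on products.
  From \<open>z\<^sup>q = f(t)\<close> we get \<open>q deg z = m deg t\<close>, so if \<open>\<phi>\<close> is non-trivial then \<open>deg t = q d\<close> and
  \<open>deg z = m d\<close> with \<open>d > 0\<close>, and every \<open>deg x\<close> equals \<open>d (q k + m j)\<close>, so no degree lies strictly
  between \<open>0\<close> and \<open>2 d\<close>. But if \<open>p\<^sup>r\<close> is the exact power of \<open>p\<close> dividing \<open>m d\<close>, then \<open>p\<^sup>r\<close> divides
  \<open>d\<close>, and the coefficient of \<open>U\<^bsup>m d - p\<^sup>r\<^esup>\<close> in \<open>\<phi> z\<close> has degree exactly
  \<open>p\<^sup>r\<close> (Lucas' theorem), although \<open>0 < p\<^sup>r \<le> d\<close>.\<close>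

locale comm_ring_hom =
  fixes hom :: "'a::comm_ring_1 \<Rightarrow> 'b::comm_ring_1"
  assumes hom_add [simp]: "hom (x + y) = hom x + hom y"
    and hom_mult [simp]: "hom (x * y) = hom x * hom y"
    and hom_one [simp]: "hom 1 = 1"
begin

lemma hom_zero [simp]: "hom 0 = 0"
  using hom_add[of 0 0] by simp

lemma hom_uminus [simp]: "hom (- x) = - hom x"
  using hom_add[of x "- x"] by (simp add: eq_neg_iff_add_eq_0 add.commute)

lemma hom_diff [simp]: "hom (x - y) = hom x - hom y"
  using hom_add[of x "- y"] by simp

lemma hom_power [simp]: "hom (x ^ n) = hom x ^ n"
  by (induct n) simp_all

lemma hom_of_nat [simp]: "hom (of_nat n) = of_nat n"
  by (induct n) simp_all

lemma hom_sum: "hom (sum f A) = (\<Sum>a\<in>A. hom (f a))"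
  by (induct A rule: infinite_finite_induct) simp_all

lemma map_poly_hom_add: "map_poly hom (P + Q) = map_poly hom P + map_poly hom Q"
  by (rule poly_eqI) (simp add: coeff_map_poly)

lemma map_poly_hom_mult: "map_poly hom (P * Q) = map_poly hom P * map_poly hom Q"
  by (rule poly_eqI) (simp add: coeff_map_poly coeff_mult hom_sum)

lemma poly_map_poly_pCons [simp]:
  "poly (map_poly hom (pCons c P)) x = hom c + x * poly (map_poly hom P) x"
  by (simp add: map_poly_pCons)

lemma poly_map_poly_monom [simp]: "poly (map_poly hom (monom c n)) x = hom c * x ^ n"
  by (simp add: map_poly_monom poly_monom)

lemma comm_ring_hom_poly_map_poly: "comm_ring_hom (\<lambda>P. poly (map_poly hom P) x)"
  by unfold_locales (simp_all add: map_poly_hom_add map_poly_hom_mult)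

end

lemma field_hom_eq_0_iff:
  fixes hom :: "'a::field \<Rightarrow> 'b::comm_ring_1"
  assumes "comm_ring_hom hom" and "(1::'b) \<noteq> 0"
  shows "hom x = 0 \<longleftrightarrow> x = 0"
proof
  interpret comm_ring_hom hom by fact
  assume "hom x = 0"
  show "x = 0"
  proof (rule ccontr)
    assume "x \<noteq> 0"
    then have "hom x * hom (inverse x) = 1" by (simp flip: hom_mult)
    with \<open>hom x = 0\<close> assms(2) show False by simp
  qed
qed (simp add: comm_ring_hom.hom_zero[OF assms(1)])

lemma CHAR_eq_field_hom:
  fixes hom :: "'a::field \<Rightarrow> 'b::comm_ring_1"
  assumes "comm_ring_hom hom" and "(1::'b) \<noteq> 0"
  shows "CHAR('b) = CHAR('a)"
proof -
  have "of_nat n = (0::'b) \<longleftrightarrow> of_nat n = (0::'a)" for n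
    using field_hom_eq_0_iff[OF assms, of "of_nat n"] comm_ring_hom.hom_of_nat[OF assms(1)] by simp
  then show ?thesis
    by (intro CHAR_eqI) (simp_all add: of_nat_eq_0_iff_char_dvd)
qed

lemma degree_diff_eq_left:
  fixes P Q :: "'a::ab_group_add poly"
  shows "degree Q < degree P \<Longrightarrow> degree (P - Q) = degree P"
  using degree_add_eq_left[of "- Q" P] by simp

lemma no_zero_divisors_poly_mult:
  fixes P Q :: "'a::comm_ring_1 poly"
  assumes "\<And>x y::'a. x \<noteq> 0 \<Longrightarrow> y \<noteq> 0 \<Longrightarrow> x * y \<noteq> 0" and "P \<noteq> 0" and "Q \<noteq> 0"
  shows "P * Q \<noteq> 0 \<and> degree (P * Q) = degree P + degree Q"
proof -
  have lead: "coeff (P * Q) (degree P + degree Q) \<noteq> 0"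
    using assms by (simp add: coeff_mult_degree_sum)
  then have "degree P + degree Q \<le> degree (P * Q)" by (rule le_degree)
  with degree_mult_le[of P Q] lead show ?thesis by auto
qed

lemma no_zero_divisors_poly_power:
  fixes P :: "'a::comm_ring_1 poly"
  assumes "\<And>x y::'a. x \<noteq> 0 \<Longrightarrow> y \<noteq> 0 \<Longrightarrow> x * y \<noteq> 0" and "(1::'a) \<noteq> 0" and "P \<noteq> 0"
  shows "P ^ n \<noteq> 0 \<and> degree (P ^ n) = n * degree P"
  by (induct n) (simp_all add: assms no_zero_divisors_poly_mult)

lemma degree_sum_distinct_degrees:
  fixes g :: "'b \<Rightarrow> 'a::comm_ring_1 poly"
  assumes "finite A" and "A \<noteq> {}" and "\<And>i. i \<in> A \<Longrightarrow> g i \<noteq> 0" and "inj_on (\<lambda>i. degree (g i)) A"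
  shows "sum g A \<noteq> 0 \<and> degree (sum g A) \<in> (\<lambda>i. degree (g i)) ` A"
  using assms
proof (induction A rule: finite_ne_induct)
  case (insert x F)
  then have IH: "sum g F \<noteq> 0" "degree (sum g F) \<in> (\<lambda>i. degree (g i)) ` F"
    by (auto simp: inj_on_insert)
  moreover have "degree (g x) \<notin> (\<lambda>i. degree (g i)) ` F"
    using insert.hyps(3) insert.prems(2) by (simp add: inj_on_insert)
  ultimately have "degree (sum g F) \<noteq> degree (g x)" by metis
  then consider "degree (sum g F) < degree (g x)" | "degree (g x) < degree (sum g F)"
    by linarith
  then show ?case
  proof cases
    case 1
    then have "degree (g x + sum g F) = degree (g x)" by (rule degree_add_eq_left)
    with 1 insert.hyps show ?thesis by auto
  next
    case 2
    then have "degree (g x + sum g F) = degree (sum g F)" by (rule degree_add_eq_right)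
    with 2 IH insert.hyps show ?thesis by auto
  qed
qed simp

lemma coprime_mult_add_eq_imp_eq:
  fixes m q a b i j :: nat
  assumes "coprime m q" and "i < q" and "j < q" and "q * a + m * i = q * b + m * j"
  shows "i = j"
proof -
  have "[q * a + m * i = q * b + m * j] (mod q)" using assms(4) by simp
  then have "[m * i = m * j] (mod q)" by (simp add: cong_def)
  then have "[i = j] (mod q)"
    using assms(1) by (simp add: cong_mult_lcancel_nat)
  then show ?thesis using assms(2,3) by (rule cong_less_modulus_unique_nat)
qed

lemma of_nat_CHAR_power_mult_choose:
  assumes "prime CHAR('a::comm_ring_1)"
  shows "of_nat (CHAR('a) ^ r * k choose CHAR('a) ^ r) = (of_nat k :: 'a)"
proof -
  define s where "s = CHAR('a) ^ r"
  have "s > 0" using assms by (simp add: s_def prime_gt_0_nat)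
  have frobenius: "[:1, 1:] ^ s = (1 + monom 1 s :: 'a poly)"
  proof -
    have "(1 + monom 1 1 :: 'a poly) ^ s = 1 ^ s + monom 1 1 ^ s"
      by (rule freshmans_dream') (simp_all add: assms s_def)
    moreover have "[:1, 1:] = (1 + monom 1 1 :: 'a poly)"
      by (simp add: monom_altdef one_pCons)
    ultimately show ?thesis by (simp add: monom_power)
  qed
  have "[:1, 1:] ^ (s * k) = (\<Sum>j\<le>k. monom (of_nat (k choose j) :: 'a) (s * j))"
    by (simp add: power_mult frobenius binomial_ring[of "monom 1 s" 1, simplified add.commute]
        monom_power of_nat_poly smult_monom flip: add.commute)
  then have "coeff ([:1, 1:] ^ (s * k)) s = (\<Sum>j\<le>k. if j = 1 then of_nat (k choose j) else (0::'a))"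
    using \<open>s > 0\<close> by (simp add: coeff_sum)
  also have "\<dots> = of_nat k"
    by (cases k) (simp_all add: sum.delta)
  finally have "coeff ([:1, 1:] ^ (s * k)) s = (of_nat k :: 'a)" .
  moreover have "of_nat (s * k choose s) = (of_nat k :: 'a)" if "k = 0"
    using that \<open>s > 0\<close> by (simp add: binomial_eq_0)
  ultimately show ?thesis
    using coeff_linear_poly_power[of s "s * k" "1::'a" 1] by (cases k) (simp_all add: s_def)
qed

lemma coeff_coeff_shifted_poly:
  fixes P :: "'a::comm_ring_1 poly"
  shows "coeff (coeff (poly (map_poly (\<lambda>c. [:[:c:]:]) P) [:[:0, 1:], 1:]) k) l
         = of_nat ((k + l) choose k) * coeff P (k + l)"
proof (induction P arbitrary: k l)
  case (pCons c P)
  have "map_poly (\<lambda>c. [:[:c:]:]) (pCons c P) = pCons [:[:c:]:] (map_poly (\<lambda>c. [:[:c:]:]) P)"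
    by (rule map_poly_pCons) simp
  with pCons.IH show ?case
    by (cases k; cases l) (auto simp: coeff_pCons algebra_simps split: nat.splits)
qed simp

lemma comm_ring_hom_exp_map: "exp_map \<iota> \<phi> \<Longrightarrow> comm_ring_hom \<phi>"
  by unfold_locales (simp_all add: exp_map_def)

lemma exp_map_coeff_0: "exp_map \<iota> \<phi> \<Longrightarrow> coeff (\<phi> a) 0 = a"
  by (simp add: exp_map_def poly_0_coeff_0)

lemma exp_map_degree_0: "exp_map \<iota> \<phi> \<Longrightarrow> degree (\<phi> a) = 0 \<Longrightarrow> \<phi> a = [:a:]"
  by (rule poly_eqI) (auto simp: exp_map_coeff_0 coeff_pCons coeff_eq_0 split: nat.splits)

lemma exp_map_coeff_coeff:
  assumes "exp_map \<iota> \<phi>"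
  shows "coeff (\<phi> (coeff (\<phi> a) k)) l = of_nat ((k + l) choose k) * coeff (\<phi> a) (k + l)"
proof -
  interpret comm_ring_hom \<phi> using assms by (rule comm_ring_hom_exp_map)
  have "\<phi> (coeff (\<phi> a) k) = coeff (map_poly \<phi> (\<phi> a)) k" by (simp add: coeff_map_poly)
  also have "map_poly \<phi> (\<phi> a) = poly (map_poly (\<lambda>c. [:[:c:]:]) (\<phi> a)) [:[:0, 1:], 1:]"
    using assms by (simp add: exp_map_def)
  finally show ?thesis by (simp add: coeff_coeff_shifted_poly)
qed

text \<open>With \<open>M = s k\<close> the degree of \<open>\<phi> a\<close> and \<open>w\<close> its coefficient of \<open>U\<^bsup>M - s\<^esup>\<close>, the top coefficient of \<open>\<phi> w\<close> is \<open>(M choose s)\<close> times the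
  leading coefficient of \<open>\<phi> a\<close>, and \<open>M choose s \<equiv> k\<close> modulo \<open>p\<close> by Lucas' theorem.\<close>
lemma exp_map_degree_coeff_prime_power:
  fixes \<phi> :: "'d::comm_ring_1 \<Rightarrow> 'd poly"
  assumes "exp_map \<iota> \<phi>" and no_zero_divisors: "\<And>x y::'d. x \<noteq> 0 \<Longrightarrow> y \<noteq> 0 \<Longrightarrow> x * y \<noteq> 0"
    and "prime CHAR('d)" and deg: "degree (\<phi> a) = CHAR('d) ^ r * k" and "\<not> CHAR('d) dvd k"
  shows "degree (\<phi> (coeff (\<phi> a) (CHAR('d) ^ r * k - CHAR('d) ^ r))) = CHAR('d) ^ r"
proof -
  interpret comm_ring_hom \<phi> using assms(1) by (rule comm_ring_hom_exp_map)
  define s where "s = CHAR('d) ^ r"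
  define M where "M = s * k"
  define w where "w = coeff (\<phi> a) (M - s)"
  have "k > 0" using assms(5) by (rule contrapos_np) simp
  then have "s \<le> M" by (simp add: M_def)
  have coeff_w: "coeff (\<phi> w) l = of_nat ((M - s + l) choose (M - s)) * coeff (\<phi> a) (M - s + l)" for l
    unfolding w_def by (rule exp_map_coeff_coeff[OF assms(1)])
  have "coeff (\<phi> w) l = 0" if "l > s" for l
    using that \<open>s \<le> M\<close> deg by (simp add: coeff_w coeff_eq_0 M_def s_def)
  then have "degree (\<phi> w) \<le> s" by (meson degree_le not_le)
  moreover have "coeff (\<phi> w) s = of_nat k * lead_coeff (\<phi> a)"
  proof -
    have "M choose (M - s) = M choose s" using \<open>s \<le> M\<close> by (rule binomial_symmetric[symmetric])
    then show ?thesis using \<open>s \<le> M\<close> deg of_nat_CHAR_power_mult_choose[OF assms(3), of r k]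
      by (simp add: coeff_w M_def s_def)
  qed
  moreover have "(of_nat k :: 'd) \<noteq> 0" using assms(5) by (simp add: of_nat_eq_0_iff_char_dvd)
  moreover have "a \<noteq> 0" using deg \<open>k > 0\<close> assms(3) by (auto simp: prime_gt_0_nat)
  then have "lead_coeff (\<phi> a) \<noteq> 0" using exp_map_coeff_0[OF assms(1), of a] by auto
  ultimately have "degree (\<phi> w) = s" using no_zero_divisors by (metis le_antisym le_degree)
  then show ?thesis by (simp add: w_def M_def s_def)
qed

locale gpoly_presentation =
  fixes \<iota> :: "'a::field \<Rightarrow> 'd::comm_ring_1" and z t :: 'd and p e m :: nat and \<alpha> \<beta> :: 'a
  assumes CHAR_field: "CHAR('a) = p" and p_pos: "p > 0" and \<alpha>_nonzero: "\<alpha> \<noteq> 0"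
    and e_pos: "e \<ge> 1" and m_gt_1: "m > 1" and coprime_m_p: "coprime m p"
    and presents: "presents \<iota> z t (gpoly p e m \<alpha> \<beta>)"
begin

definition q :: nat where "q = p ^ e"

definition fT :: "'a poly" where "fT = monom \<alpha> m - [:\<beta>:]"

definition evT :: "'a poly \<Rightarrow> 'd" where "evT P = poly (map_poly \<iota> P) t"

sublocale \<iota>: comm_ring_hom \<iota>
  using presents by unfold_locales (simp_all add: presents_def alg_map_def)

sublocale evT: comm_ring_hom evT
  unfolding evT_def[abs_def] by (rule \<iota>.comm_ring_hom_poly_map_poly)

lemma ev2_eq: "ev2 \<iota> z t F = poly (map_poly evT F) z"
  by (simp add: ev2_def evT_def[abs_def])

sublocale ev2: comm_ring_hom "ev2 \<iota> z t"
  unfolding ev2_eq[abs_def] by (rule evT.comm_ring_hom_poly_map_poly)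

lemma ev2_eq_0_iff: "ev2 \<iota> z t F = 0 \<longleftrightarrow> gpoly p e m \<alpha> \<beta> dvd F"
  using presents by (simp add: presents_def)

lemma ev2_surj: "surj (ev2 \<iota> z t)"
  using presents by (simp add: presents_def)

lemma prime_p: "prime p"
  using CHAR_field p_pos prime_CHAR_semidom[where 'a='a] by simp

lemma q_ge_2: "q \<ge> 2"
proof -
  have "p ^ 1 \<le> p ^ e" using e_pos p_pos by (intro power_increasing) auto
  with prime_ge_2_nat[OF prime_p] show ?thesis by (simp add: q_def)
qed

lemma coprime_m_q: "coprime m q"
  by (simp add: q_def coprime_m_p)

lemma gpoly_eq: "gpoly p e m \<alpha> \<beta> = monom 1 q - [:fT:]"
  by (simp add: gpoly_def q_def fT_def)

lemma degree_gpoly: "degree (gpoly p e m \<alpha> \<beta>) = q"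
  and lead_coeff_gpoly: "lead_coeff (gpoly p e m \<alpha> \<beta>) = 1"
proof -
  have "degree (monom (1::'a poly) q - [:fT:]) = q"
    using q_ge_2 by (subst degree_diff_eq_left) (simp_all add: degree_monom_eq)
  then show deg: "degree (gpoly p e m \<alpha> \<beta>) = q" by (simp add: gpoly_eq)
  show "lead_coeff (gpoly p e m \<alpha> \<beta>) = 1"
    using q_ge_2 unfolding deg by (simp add: gpoly_eq coeff_pCons split: nat.split)
qed

lemma degree_fT: "degree fT = m"
  using m_gt_1 \<alpha>_nonzero by (simp add: fT_def degree_diff_eq_left degree_monom_eq)

lemma fT_nonzero: "fT \<noteq> 0"
  using degree_fT m_gt_1 by auto

lemma z_power_q: "z ^ q = evT fT"
proof -
  have "ev2 \<iota> z t (gpoly p e m \<alpha> \<beta>) = 0" by (simp add: ev2_eq_0_iff)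
  then show ?thesis by (simp only: gpoly_eq ev2.hom_diff) (simp add: ev2_eq)
qed

lemma evT_eq_0_iff: "evT P = 0 \<longleftrightarrow> P = 0"
proof
  assume "evT P = 0"
  then have "gpoly p e m \<alpha> \<beta> dvd [:P:]" by (simp add: ev2_eq_0_iff[symmetric] ev2_eq)
  with q_ge_2 show "P = 0"
    using dvd_imp_degree_le[of "gpoly p e m \<alpha> \<beta>" "[:P:]"] by (auto simp: degree_gpoly)
qed simp

lemma one_neq_zero: "(1::'d) \<noteq> 0"
  using evT_eq_0_iff[of 1] by simp

lemma CHAR_ring: "CHAR('d) = p"
  using CHAR_eq_field_hom[OF \<iota>.comm_ring_hom_axioms one_neq_zero] CHAR_field by simp

lemma ev2_reduced: "\<exists>R. degree R < q \<and> x = ev2 \<iota> z t R"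
proof -
  obtain F where F: "x = ev2 \<iota> z t F" using ev2_surj by (metis surjD)
  obtain Q R where "pseudo_divmod F (gpoly p e m \<alpha> \<beta>) = (Q, R)" by fastforce
  moreover have "gpoly p e m \<alpha> \<beta> \<noteq> 0" using q_ge_2 degree_gpoly by auto
  ultimately have "F = gpoly p e m \<alpha> \<beta> * Q + R" and "R = 0 \<or> degree R < q"
    using pseudo_divmod[of "gpoly p e m \<alpha> \<beta>" F Q R] lead_coeff_gpoly by (simp_all add: degree_gpoly)
  moreover have "ev2 \<iota> z t (gpoly p e m \<alpha> \<beta>) = 0" by (simp add: ev2_eq_0_iff)
  ultimately show ?thesis using F q_ge_2 by (intro exI[of _ R]) auto
qed

definition frob_norm :: "'a poly poly \<Rightarrow> 'a poly" where
  "frob_norm R = (\<Sum>i\<le>degree R. coeff R i ^ q * fT ^ i)"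

lemma ev2_power_q: "ev2 \<iota> z t R ^ q = evT (frob_norm R)"
proof -
  have "ev2 \<iota> z t R ^ q = (\<Sum>i\<le>degree R. evT (coeff R i) * z ^ i) ^ q"
    by (cases "R = 0") (simp_all add: ev2_eq poly_altdef coeff_map_poly map_poly_degree_eq evT_eq_0_iff)
  also have "\<dots> = (\<Sum>i\<le>degree R. (evT (coeff R i) * z ^ i) ^ q)"
    by (rule freshmans_dream_sum') (simp_all add: CHAR_ring prime_p q_def)
  also have "\<dots> = evT (frob_norm R)"
  proof -
    have "(z ^ i) ^ q = evT (fT ^ i)" for i
      by (metis power_mult mult.commute z_power_q evT.hom_power)
    then show ?thesis by (simp add: frob_norm_def evT.hom_sum power_mult_distrib)
  qed
  finally show ?thesis .
qed

lemma frob_norm_degree: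
  assumes "R \<noteq> 0" and "degree R < q"
  shows "frob_norm R \<noteq> 0 \<and> (\<exists>k j. degree (frob_norm R) = q * k + m * j)"
proof -
  define S where "S = {i. i \<le> degree R \<and> coeff R i \<noteq> 0}"
  define summand where "summand i = coeff R i ^ q * fT ^ i" for i
  have degree_summand: "degree (summand i) = q * degree (coeff R i) + m * i" if "i \<in> S" for i
    using that fT_nonzero by (simp add: S_def summand_def degree_mult_eq degree_power_eq degree_fT)
  have "frob_norm R = sum summand S"
    using q_ge_2 by (auto simp: frob_norm_def summand_def S_def intro: sum.mono_neutral_right)
  moreover have "sum summand S \<noteq> 0 \<and> degree (sum summand S) \<in> (\<lambda>i. degree (summand i)) ` S"
  proof (rule degree_sum_distinct_degrees)
    show "S \<noteq> {}" using assms(1) by (auto simp: S_def)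
    show "summand i \<noteq> 0" if "i \<in> S" for i
      using that fT_nonzero by (simp add: S_def summand_def)
    show "inj_on (\<lambda>i. degree (summand i)) S"
      using assms(2) coprime_mult_add_eq_imp_eq[OF coprime_m_q]
      by (intro inj_onI) (auto simp: degree_summand S_def)
  qed (simp add: S_def)
  ultimately show ?thesis using degree_summand by auto
qed

lemma power_q_eq_evT:
  assumes "x \<noteq> 0"
  obtains N k j where "N \<noteq> 0" and "x ^ q = evT N" and "degree N = q * k + m * j"
proof -
  obtain R where "degree R < q" and "x = ev2 \<iota> z t R" using ev2_reduced by blast
  moreover from this assms have "R \<noteq> 0" by auto
  ultimately show ?thesis using that frob_norm_degree ev2_power_q by metis
qed

lemma no_zero_divisors: "x \<noteq> 0 \<Longrightarrow> y \<noteq> 0 \<Longrightarrow> x * y \<noteq> (0::'d)"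
proof -
  assume "x \<noteq> 0" "y \<noteq> 0"
  then obtain N N' where "N \<noteq> 0" "x ^ q = evT N" "N' \<noteq> 0" "y ^ q = evT N'"
    by (metis power_q_eq_evT)
  then have "(x * y) ^ q \<noteq> 0" by (simp add: power_mult_distrib evT_eq_0_iff flip: evT.hom_mult)
  then show "x * y \<noteq> 0" using q_ge_2 by (auto simp: power_0_left)
qed

end

locale gpoly_exp_map = gpoly_presentation \<iota> z t p e m \<alpha> \<beta>
  for \<iota> :: "'a::field \<Rightarrow> 'd::comm_ring_1" and z t p e m \<alpha> \<beta> +
  fixes \<phi> :: "'d \<Rightarrow> 'd poly"
  assumes exp_map: "exp_map \<iota> \<phi>"
begin

sublocale \<phi>: comm_ring_hom \<phi>
  using exp_map by (rule comm_ring_hom_exp_map)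

lemma exp_map_scalar: "\<phi> (\<iota> c) = [:\<iota> c:]"
  using exp_map by (simp add: exp_map_def)

lemma exp_map_nonzero: "x \<noteq> 0 \<Longrightarrow> \<phi> x \<noteq> 0"
  using exp_map_coeff_0[OF exp_map, of x] by auto

lemma degree_exp_map_mult:
  "x \<noteq> 0 \<Longrightarrow> y \<noteq> 0 \<Longrightarrow> degree (\<phi> x * \<phi> y) = degree (\<phi> x) + degree (\<phi> y)"
  using no_zero_divisors_poly_mult[OF no_zero_divisors] by (simp add: exp_map_nonzero)

lemma degree_exp_map_power: "x \<noteq> 0 \<Longrightarrow> degree (\<phi> x ^ n) = n * degree (\<phi> x)"
  using no_zero_divisors_poly_power[OF no_zero_divisors one_neq_zero] by (simp add: exp_map_nonzero)

lemma evT_pCons: "evT (pCons c P) = \<iota> c + t * evT P"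
  by (simp add: evT_def)

lemma degree_exp_map_evT: "P \<noteq> 0 \<Longrightarrow> degree (\<phi> (evT P)) = degree (\<phi> t) * degree P"
proof (induction P)
  case (pCons c P)
  show ?case
  proof (cases "P = 0")
    case False
    have "t \<noteq> 0" using evT_eq_0_iff[of "[:0, 1:]"] by (simp add: evT_pCons)
    moreover have "evT P \<noteq> 0" using False by (simp add: evT_eq_0_iff)
    ultimately have "degree (\<phi> t * \<phi> (evT P)) = degree (\<phi> t) * degree (pCons c P)"
      using pCons.IH[OF False] False by (simp add: degree_exp_map_mult)
    moreover have "degree ([:\<iota> c:] + X) = degree X" for X :: "'d poly"
      by (cases "degree X = 0") (auto elim!: degree_eq_zeroE simp: degree_add_eq_right)
    ultimately show ?thesis by (simp add: evT_pCons exp_map_scalar)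
  qed (simp add: evT_pCons exp_map_scalar)
qed simp

lemma trivial_if_fixes_generators:
  assumes "\<phi> z = [:z:]" and "\<phi> t = [:t:]"
  shows "trivial_exp_map \<phi>"
proof -
  have evT_fixed: "\<phi> (evT P) = [:evT P:]" for P
    by (induction P) (simp_all add: evT_pCons exp_map_scalar assms(2))
  have "\<phi> (ev2 \<iota> z t F) = [:ev2 \<iota> z t F:]" for F
    by (induction F) (simp_all add: ev2_eq evT_fixed assms(1) flip: evT_def)
  with ev2_surj show ?thesis unfolding trivial_exp_map_def by (metis surjD)
qed

lemma degree_exp_map_generators:
  assumes "\<not> trivial_exp_map \<phi>"
  obtains d where "d > 0" and "degree (\<phi> t) = q * d" and "degree (\<phi> z) = m * d"
proof -
  have "z \<noteq> 0" using z_power_q q_ge_2 fT_nonzero by (auto simp: evT_eq_0_iff power_0_left)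
  have balance: "q * degree (\<phi> z) = m * degree (\<phi> t)"
    using arg_cong[OF z_power_q, of "\<lambda>x. degree (\<phi> x)"] fT_nonzero \<open>z \<noteq> 0\<close>
    by (simp add: degree_exp_map_power degree_exp_map_evT degree_fT)
  have "degree (\<phi> t) \<noteq> 0"
  proof
    assume "degree (\<phi> t) = 0"
    moreover from this balance q_ge_2 have "degree (\<phi> z) = 0" by simp
    ultimately show False
      using assms trivial_if_fixes_generators exp_map_degree_0[OF exp_map] by metis
  qed
  from balance have "q dvd degree (\<phi> t)"
    using coprime_m_q by (metis coprime_commute coprime_dvd_mult_right_iff dvd_triv_left)
  then obtain d where "degree (\<phi> t) = q * d" by blast
  with balance \<open>degree (\<phi> t) \<noteq> 0\<close> q_ge_2 show ?thesis by (intro that[of d]) auto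
qed

lemma degree_exp_map_multiple:
  assumes "degree (\<phi> t) = q * d" and "x \<noteq> 0"
  obtains j where "degree (\<phi> x) = d * j" and "j \<noteq> 1"
proof -
  obtain N k i where "N \<noteq> 0" and "x ^ q = evT N" and N: "degree N = q * k + m * i"
    using power_q_eq_evT[OF assms(2)] by blast
  have "q * degree (\<phi> x) = degree (\<phi> (evT N))"
    using \<open>x ^ q = evT N\<close> assms(2) by (metis \<phi>.hom_power degree_exp_map_power)
  also have "\<dots> = q * (d * (q * k + m * i))"
    using \<open>N \<noteq> 0\<close> N assms(1) by (simp add: degree_exp_map_evT)
  finally have "q * degree (\<phi> x) = q * (d * (q * k + m * i))" .
  then have "degree (\<phi> x) = d * (q * k + m * i)" using q_ge_2 by simp
  moreover have "q * k + m * i \<noteq> 1"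
    using q_ge_2 m_gt_1 by (cases k; cases i) auto
  ultimately show ?thesis by (rule that)
qed

theorem exp_map_trivial: "trivial_exp_map \<phi>"
proof (rule ccontr)
  assume "\<not> trivial_exp_map \<phi>"
  then obtain d where "d > 0" and deg_t: "degree (\<phi> t) = q * d" and deg_z: "degree (\<phi> z) = m * d"
    by (rule degree_exp_map_generators)
  define r where "r = multiplicity p (m * d)"
  have "\<not> is_unit p" using prime_p by (simp add: prime_nat_iff)
  then obtain k where M: "m * d = p ^ r * k" and "\<not> p dvd k"
    using multiplicity_decompose'[of "m * d" p] \<open>d > 0\<close> m_gt_1 unfolding r_def by auto
  define w where "w = coeff (\<phi> z) (p ^ r * k - p ^ r)"
  have deg_w: "degree (\<phi> w) = p ^ r"
    using exp_map_degree_coeff_prime_power[OF exp_map no_zero_divisors] \<open>\<not> p dvd k\<close> deg_z M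
    by (simp add: w_def CHAR_ring prime_p)
  have "p ^ r dvd d"
    using M coprime_m_p by (metis coprime_commute coprime_dvd_mult_right_iff coprime_power_left_iff dvd_triv_left)
  then have "p ^ r \<le> d" using \<open>d > 0\<close> by (rule dvd_imp_le)
  moreover have "w \<noteq> 0" using deg_w p_pos by auto
  then obtain j where "degree (\<phi> w) = d * j" and "j \<noteq> 1"
    using degree_exp_map_multiple[OF deg_t] by blast
  moreover have "j \<noteq> 0" using deg_w \<open>degree (\<phi> w) = d * j\<close> p_pos by (cases j) auto
  ultimately show False using deg_w \<open>d > 0\<close> by (cases j) auto
qed

end

theorem lemma3p2:
  fixes \<iota> :: "'a::field \<Rightarrow> 'd::comm_ring_1"
    and z t :: 'd and p e m :: nat and \<alpha> \<beta> :: 'a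
  assumes "CHAR('a) = p" and "p > 0"
    and "\<alpha> \<noteq> 0" and "\<beta> \<noteq> 0" and "e \<ge> 1" and "m > 1" and "coprime m p"
    and "presents \<iota> z t (gpoly p e m \<alpha> \<beta>)"
  shows "\<forall>\<phi>. exp_map \<iota> \<phi> \<longrightarrow> trivial_exp_map \<phi>"
proof (intro allI impI)
  fix \<phi> assume "exp_map \<iota> \<phi>"
  with assms interpret gpoly_exp_map \<iota> z t p e m \<alpha> \<beta> \<phi>
    by (simp add: gpoly_exp_map_def gpoly_presentation_def gpoly_exp_map_axioms_def)
  show "trivial_exp_map \<phi>" by (rule exp_map_trivial)
qed

end
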